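(* Let $S$ be an abelian surface over $\mathbb{F}_q$ isogenous to $E_1\times E_2$, where $E_1,E_2$ are ordinary elliptic curves over $\mathbb{F}_q$ that are isogenous over $\overline{\mathbb{F}}_q$. Let $m$ be the smallest positive integer such that $E_1$ and $E_2$ are isogenous over $\mathbb{F}_{q^m}$. Then $m\in\{1,2,3,4,6\}$, $S$ has angle rank $1$, and $\mathrm{SF}(S)\cong\mathrm{U}(1)\times C_m$.
   Context: Let $q=p^d$ with $p$ prime. For an abelian variety $A$ of dimension $g$ over $\mathbb{F}_q$, let $P_A(T)$ be the characteristic polynomial of Frobenius (on an $\ell$-adic Tate module); its roots, with multiplicity, are $\alpha_1,\dots,\alpha_g,\bar\alpha_1,\dots,\bar\alpha_g$ with $|\alpha_j|=\sqrt q$; put $u_j=\alpha_j/\sqrt q\in\mathrm{U}(1)$. The Serre–Frobenius group $\mathrm{SF}(A)$ is the closure in $\mathrm{U}(1)^g$ of the subgroup generated by $(u_1,\dots,u_g)$. The angle rank is the rank of the subgroup of $\mathbb{C}^\times$ generated by $u_1,\dots,u_g$. $C_m$ is the cyclic group of order $m$. An elliptic curve with Frobenius polynomial $T^2-aT+q$ is ordinary if $p\nmid a$. *)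

theory Defs
  imports "HOL-Analysis.Analysis" "HOL-Computational_Algebra.Polynomial"
begin

definition frob_poly :: "int \<Rightarrow> nat \<Rightarrow> int poly" where
  "frob_poly a q = [:int q, - a, 1:]"

text \<open>Characteristic polynomial of Frobenius over F_(q^n) of an elliptic curve
  whose Frobenius eigenvalues over F_q are alpha and its conjugate.
  By Tate's theorem two elliptic curves are isogenous over F_(q^n) iff these agree.\<close>
definition frob_poly_ext :: "complex \<Rightarrow> nat \<Rightarrow> complex poly" where
  "frob_poly_ext \<alpha> n = [:- (\<alpha> ^ n), 1:] * [:- (cnj \<alpha> ^ n), 1:]"

definition isogenous_over_ext :: "complex \<Rightarrow> complex \<Rightarrow> nat \<Rightarrow> bool" where
  "isogenous_over_ext \<alpha>1 \<alpha>2 n \<longleftrightarrow> frob_poly_ext \<alpha>1 n = frob_poly_ext \<alpha>2 n"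

text \<open>Serre--Frobenius group of a surface with normalized eigenvalues (u1,u2):
  closure in U(1)^2 (inside complex x complex, product topology) of the subgroup generated.\<close>
definition SF2 :: "complex \<Rightarrow> complex \<Rightarrow> (complex \<times> complex) set" where
  "SF2 u1 u2 = closure {(u1 powi k, u2 powi k) | k :: int. True}"

definition gen_mult_group :: "complex list \<Rightarrow> complex set" where
  "gen_mult_group us = {(\<Prod>i<length us. (us ! i) powi (k i)) | k :: nat \<Rightarrow> int. True}"

definition mult_indep :: "complex list \<Rightarrow> bool" where
  "mult_indep xs \<longleftrightarrow> (\<forall>k :: nat \<Rightarrow> int.
      (\<Prod>i<length xs. (xs ! i) powi (k i)) = 1 \<longrightarrow> (\<forall>i<length xs. k i = 0))"

definition has_rank :: "complex set \<Rightarrow> nat \<Rightarrow> bool" where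
  "has_rank G r \<longleftrightarrow>
     (\<exists>xs. length xs = r \<and> set xs \<subseteq> G \<and> mult_indep xs) \<and>
     \<not> (\<exists>xs. length xs = Suc r \<and> set xs \<subseteq> G \<and> mult_indep xs)"

definition angle_rank_is :: "complex list \<Rightarrow> nat \<Rightarrow> bool" where
  "angle_rank_is us r \<longleftrightarrow> has_rank (gen_mult_group us) r"

text \<open>U(1) x C_m realised inside complex x complex (C_m = m-th roots of unity).\<close>
definition U1_times_C :: "nat \<Rightarrow> (complex \<times> complex) set" where
  "U1_times_C m = {(z, w). cmod z = 1 \<and> w ^ m = 1}"

definition pmul :: "complex \<times> complex \<Rightarrow> complex \<times> complex \<Rightarrow> complex \<times> complex" where
  "pmul x y = (fst x * fst y, snd x * snd y)"

definition top_group_iso :: "(complex \<times> complex) set \<Rightarrow> (complex \<times> complex) set \<Rightarrow> bool" where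
  "top_group_iso A B \<longleftrightarrow> (\<exists>f g. homeomorphism A B f g \<and>
      (\<forall>x\<in>A. \<forall>y\<in>A. f (pmul x y) = pmul (f x) (f y)))"

end

theory Submission
  imports Defs "HOL-Computational_Algebra.Primes"
begin

text \<open>
  Let \<open>\<beta>\<^sub>1, \<beta>\<^sub>2\<close> be the Frobenius eigenvalues of \<open>S\<close>. Up to complex conjugation they are those
  of \<open>E\<^sub>1\<close> and \<open>E\<^sub>2\<close>, and the curves become isogenous over \<open>F_(q^n)\<close> exactly when
  \<open>\<beta>\<^sub>2\<^sup>n \<in> {\<beta>\<^sub>1\<^sup>n, cnj \<beta>\<^sub>1\<^sup>n}\<close>. Minimality of \<open>m\<close> therefore gives \<open>\<beta>\<^sub>2 = \<zeta> \<gamma>\<close> with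
  \<open>\<gamma> \<in> {\<beta>\<^sub>1, cnj \<beta>\<^sub>1}\<close> and \<open>\<zeta>\<close> a primitive \<open>m\<close>-th root of unity. Reducing powers modulo the
  Frobenius quadratics shows that \<open>\<zeta> + cnj \<zeta>\<close> is rational; for a root of unity a Lucas sequence
  argument makes it an integer in \<open>[-2, 2]\<close>, so \<open>\<zeta>\<^sup>4 = 1\<close> or \<open>\<zeta>\<^sup>6 = 1\<close>, i.e. \<open>m \<in> {1, 2, 3, 4, 6}\<close>.

  Ordinarity says that \<open>u = \<beta>\<^sub>1 / sqrt q\<close> is not a root of unity, so by Kronecker's theorem the
  powers of \<open>u\<close> are dense in \<open>U(1)\<close> and the group generated by \<open>(u, \<zeta>)\<close> has closure
  \<open>U(1) \<times> C\<^sub>m\<close>. The normalised eigenvalues are \<open>(u, \<zeta> u\<^sup>s)\<close> with \<open>s = \<plusminus>1\<close>, the image of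
  \<open>(u, \<zeta>)\<close> under the shear \<open>(z, w) \<mapsto> (z, w z\<^sup>s)\<close>, which is an isomorphism of topological groups.
  The angle rank is \<open>1\<close> because the \<open>m\<close>-th power of every element of the generated group lies in
  the cyclic group generated by \<open>u\<close>.
\<close>

section \<open>Lucas sequences and traces of roots of unity\<close>

fun lucas_V :: "int \<Rightarrow> int \<Rightarrow> nat \<Rightarrow> int" where
  "lucas_V P Q 0 = 2"
| "lucas_V P Q (Suc 0) = P"
| "lucas_V P Q (Suc (Suc k)) = P * lucas_V P Q (Suc k) - Q * lucas_V P Q k"

lemma power_sum_eq_lucas_V:
  fixes X Y :: "'a :: comm_ring_1"
  assumes "X + Y = of_int P" and "X * Y = of_int Q"
  shows "X ^ k + Y ^ k = of_int (lucas_V P Q k)"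
proof (induction k rule: induct_nat_012)
  case (ge2 k)
  have "X ^ Suc (Suc k) + Y ^ Suc (Suc k)
      = (X + Y) * (X ^ Suc k + Y ^ Suc k) - (X * Y) * (X ^ k + Y ^ k)"
    by (simp add: algebra_simps)
  with ge2 assms show ?case
    by simp
qed (use assms in simp_all)

lemma lucas_V_cong_power:
  assumes "k > 0"
  shows "Q dvd lucas_V P Q k - P ^ k"
  using assms
proof (induction k rule: induct_nat_012)
  case (ge2 k)
  have "lucas_V P Q (Suc (Suc k)) - P ^ Suc (Suc k)
      = P * (lucas_V P Q (Suc k) - P ^ Suc k) - Q * lucas_V P Q k"
    by (simp add: algebra_simps)
  with ge2 show ?case
    by (metis dvd_diff dvd_mult dvd_triv_left zero_less_Suc)
qed simp_all

text \<open>Apply the Lucas sequence to \<open>X = x v\<close>, \<open>Y = y v\<close>: then \<open>V\<^sub>N = 2 v\<^sup>N\<close>, while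
  \<open>V\<^sub>N \<equiv> u\<^sup>N (mod v\<^sup>2)\<close>.\<close>

lemma root_of_unity_trace_dvd:
  fixes x y :: "'a :: {comm_ring_1, ring_char_0}"
  assumes "x * y = 1" and "(x + y) * of_int v = of_int u" and "x ^ N = 1" and "N > 0"
  shows "v dvd u ^ N"
proof -
  have "y ^ N = (x * y) ^ N"
    using assms(3) by (simp add: power_mult_distrib)
  then have "y ^ N = 1"
    using assms(1) by simp
  have lucas: "(x * of_int v) ^ N + (y * of_int v) ^ N = of_int (lucas_V u (v ^ 2) N)"
  proof (rule power_sum_eq_lucas_V)
    show "x * of_int v + y * of_int v = of_int u"
      using assms(2) by (simp add: algebra_simps)
    have "x * of_int v * (y * of_int v) = (x * y) * of_int v * of_int v"
      by (simp add: ac_simps)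
    then show "x * of_int v * (y * of_int v) = of_int (v ^ 2)"
      using assms(1) by (simp add: power2_eq_square)
  qed
  have "(of_int (lucas_V u (v ^ 2) N) :: 'a) = (x ^ N + y ^ N) * of_int v ^ N"
    unfolding lucas[symmetric] by (simp add: power_mult_distrib algebra_simps)
  also have "\<dots> = of_int (2 * v ^ N)"
    using assms(3) \<open>y ^ N = 1\<close> by simp
  finally have lucas_eq: "lucas_V u (v ^ 2) N = 2 * v ^ N"
    by (simp only: of_int_eq_iff)
  have "v ^ 2 dvd 2 * v ^ N - u ^ N"
    using lucas_V_cong_power[OF \<open>N > 0\<close>, of "v ^ 2" u] unfolding lucas_eq .
  moreover have "v dvd v ^ 2"
    by (simp add: power2_eq_square)
  ultimately have "v dvd 2 * v ^ N - u ^ N"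
    by (rule dvd_trans[rotated])
  moreover have "v dvd 2 * v ^ N"
    using \<open>N > 0\<close> by (simp add: dvd_power)
  ultimately have "v dvd 2 * v ^ N - (2 * v ^ N - u ^ N)"
    by (rule dvd_diff[rotated])
  then show ?thesis
    by simp
qed

lemma root_of_unity_rational_trace_Ints:
  fixes x y :: "'a :: field_char_0"
  assumes "x * y = 1" and "(x + y) * of_int V = of_int U" and "V \<noteq> 0"
    and "x ^ N = 1" and "N > 0"
  shows "x + y \<in> \<int>"
proof -
  obtain u v where uv: "quotient_of (of_int U / of_int V) = (u, v)"
    by fastforce
  have "x + y = of_rat (of_int U / of_int V)"
    using assms(2,3) by (simp add: of_rat_divide field_simps)
  also have "\<dots> = of_int u / of_int v"
    by (simp add: quotient_of_div[OF uv] of_rat_divide)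
  finally have trace: "x + y = of_int u / of_int v" .
  have "v > 0" and "coprime u v"
    using quotient_of_denom_pos[OF uv] quotient_of_coprime[OF uv] by auto
  have "(x + y) * of_int v = of_int u"
    using trace \<open>v > 0\<close> by simp
  then have "v dvd u ^ N"
    using root_of_unity_trace_dvd assms(1,4,5) by blast
  moreover have "coprime v (u ^ N)"
    using \<open>coprime u v\<close> by (simp add: coprime_commute)
  ultimately have "is_unit v"
    using coprime_absorb_left by blast
  with \<open>v > 0\<close> have "v = 1"
    by simp
  then show ?thesis
    using trace by simp
qed

lemma quadratic_root_power_4_or_6:
  fixes \<zeta> :: "'a :: idom"
  assumes quad: "\<zeta>\<^sup>2 - of_int k * \<zeta> + 1 = 0" and "\<bar>k\<bar> \<le> 2"
  shows "\<zeta> ^ 4 = 1 \<or> \<zeta> ^ 6 = 1"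
proof -
  consider "k = -2" | "k = -1" | "k = 0" | "k = 1" | "k = 2"
    using \<open>\<bar>k\<bar> \<le> 2\<close> by linarith
  then show ?thesis
  proof cases
    case 1
    then have "(\<zeta> + 1)\<^sup>2 = 0"
      using quad by (simp add: power2_eq_square algebra_simps)
    then show ?thesis
      by (simp add: add_eq_0_iff2)
  next
    case 2
    then have "\<zeta> ^ 6 - 1 = (\<zeta> - 1) * (\<zeta> ^ 3 + 1) * (\<zeta>\<^sup>2 - of_int k * \<zeta> + 1)"
      by (simp add: algebra_simps eval_nat_numeral)
    then show ?thesis
      using quad by simp
  next
    case 3
    then have "\<zeta> ^ 4 - 1 = (\<zeta>\<^sup>2 - 1) * (\<zeta>\<^sup>2 - of_int k * \<zeta> + 1)"
      by (simp add: algebra_simps eval_nat_numeral)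
    then show ?thesis
      using quad by simp
  next
    case 4
    then have "\<zeta> ^ 6 - 1 = (\<zeta> ^ 3 - 1) * (\<zeta> + 1) * (\<zeta>\<^sup>2 - of_int k * \<zeta> + 1)"
      by (simp add: algebra_simps eval_nat_numeral)
    then show ?thesis
      using quad by simp
  next
    case 5
    then have "(\<zeta> - 1)\<^sup>2 = 0"
      using quad by (simp add: power2_eq_square algebra_simps)
    then show ?thesis
      by simp
  qed
qed

lemma unit_integral_trace_power_4_or_6:
  fixes \<zeta> :: complex
  assumes "\<zeta> * cnj \<zeta> = 1" and "\<zeta> + cnj \<zeta> \<in> \<int>"
  shows "\<zeta> ^ 4 = 1 \<or> \<zeta> ^ 6 = 1"
proof -
  obtain k where k: "\<zeta> + cnj \<zeta> = of_int k"
    using assms(2) Ints_cases by metis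
  have "complex_of_real ((cmod \<zeta>)\<^sup>2) = 1"
    using assms(1) by (simp only: complex_norm_square)
  then have "cmod \<zeta> = 1"
    by (simp only: of_real_eq_1_iff abs_square_eq_1 abs_norm_cancel)
  moreover have "cmod (of_int k) \<le> cmod \<zeta> + cmod (cnj \<zeta>)"
    using norm_triangle_ineq[of \<zeta> "cnj \<zeta>"] unfolding k .
  ultimately have "\<bar>k\<bar> \<le> 2"
    by simp
  moreover have "\<zeta>\<^sup>2 - of_int k * \<zeta> + 1 = 0"
    unfolding k[symmetric] assms(1)[symmetric] by (simp add: power2_eq_square algebra_simps)
  ultimately show ?thesis
    using quadratic_root_power_4_or_6 by blast
qed

section \<open>Primitive roots of unity\<close>

definition primitive_root_unity :: "nat \<Rightarrow> 'a :: monoid_mult \<Rightarrow> bool" where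
  "primitive_root_unity m \<zeta> \<longleftrightarrow> 0 < m \<and> \<zeta> ^ m = 1 \<and> (\<forall>n. 0 < n \<and> n < m \<longrightarrow> \<zeta> ^ n \<noteq> 1)"

lemma primitive_root_unity_power_eq_1_iff:
  assumes "primitive_root_unity m \<zeta>"
  shows "\<zeta> ^ n = 1 \<longleftrightarrow> m dvd n"
proof
  have m: "0 < m" "\<zeta> ^ m = 1"
    using assms unfolding primitive_root_unity_def by auto
  have "\<zeta> ^ n = \<zeta> ^ (n mod m)"
    by (metis m(2) div_mult_mod_eq power_add power_mult power_one mult_1 mult.commute)
  moreover assume "\<zeta> ^ n = 1"
  ultimately have "n mod m = 0"
    using assms m(1) unfolding primitive_root_unity_def by (metis mod_less_divisor neq0_conv)
  then show "m dvd n"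
    by (simp add: dvd_eq_mod_eq_0)
next
  assume "m dvd n"
  then show "\<zeta> ^ n = 1"
    using assms unfolding primitive_root_unity_def by (auto simp: power_mult)
qed

lemma primitive_root_unity_norm:
  fixes \<zeta> :: complex
  assumes "primitive_root_unity m \<zeta>"
  shows "cmod \<zeta> = 1"
  using assms power_eq_1_iff[of \<zeta> m] unfolding primitive_root_unity_def by auto

lemma primitive_root_unity_roots_eq:
  fixes \<zeta> :: complex
  assumes "primitive_root_unity m \<zeta>"
  shows "{w. w ^ m = 1} = (\<lambda>j. \<zeta> ^ j) ` {..<m}"
proof -
  have m: "m > 0" "\<zeta> ^ m = 1"
    using assms unfolding primitive_root_unity_def by auto
  have "\<zeta> \<noteq> 0"
    using primitive_root_unity_norm[OF assms] by auto
  have ordered: "i = j" if "i \<le> j" "j < m" "\<zeta> ^ i = \<zeta> ^ j" for i j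
  proof -
    have "\<zeta> ^ i * \<zeta> ^ (j - i) = \<zeta> ^ j"
      using \<open>i \<le> j\<close> by (simp flip: power_add)
    then have "\<zeta> ^ i * \<zeta> ^ (j - i) = \<zeta> ^ i * 1"
      using \<open>\<zeta> ^ i = \<zeta> ^ j\<close> by simp
    then have "m dvd j - i"
      using \<open>\<zeta> \<noteq> 0\<close> by (simp add: primitive_root_unity_power_eq_1_iff[OF assms])
    with that show "i = j"
      by (auto dest: dvd_imp_le)
  qed
  have "inj_on (\<lambda>j. \<zeta> ^ j) {..<m}"
  proof (rule inj_onI)
    fix i j
    assume "i \<in> {..<m}" "j \<in> {..<m}" "\<zeta> ^ i = \<zeta> ^ j"
    then show "i = j"
      using ordered[of i j] ordered[of j i] by (cases "i \<le> j") auto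
  qed
  then have "card ((\<lambda>j. \<zeta> ^ j) ` {..<m}) = m"
    by (simp add: card_image)
  moreover have "(\<lambda>j. \<zeta> ^ j) ` {..<m} \<subseteq> {w. w ^ m = 1}"
  proof -
    have "(\<zeta> ^ j) ^ m = 1" for j
      using m by (metis power_mult mult.commute power_one)
    then show ?thesis
      by auto
  qed
  moreover have "finite {w :: complex. w ^ m = 1}" and "card {w :: complex. w ^ m = 1} \<le> m"
    using card_roots_unity[of m] finite_roots_unity[of m] m(1) by simp_all
  ultimately show ?thesis
    by (intro card_seteq[symmetric]) simp_all
qed

lemma primitive_root_unity_integral_trace:
  fixes \<zeta> :: complex
  assumes "primitive_root_unity m \<zeta>" and "\<zeta> + cnj \<zeta> \<in> \<int>"
  shows "m \<in> {1, 2, 3, 4, 6}"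
proof -
  have "\<zeta> * cnj \<zeta> = 1"
    using primitive_root_unity_norm[OF assms(1)] complex_norm_square[of \<zeta>] by simp
  with assms(2) have "m dvd 4 \<or> m dvd 6"
    using unit_integral_trace_power_4_or_6 primitive_root_unity_power_eq_1_iff[OF assms(1)] by blast
  moreover have "m > 0"
    using assms(1) unfolding primitive_root_unity_def by simp
  ultimately have "m \<le> 6"
    by (auto dest: dvd_imp_le)
  with \<open>m > 0\<close> have "m \<in> {1, 2, 3, 4, 5, 6}"
    by auto
  with \<open>m dvd 4 \<or> m dvd 6\<close> show ?thesis
    by auto
qed

section \<open>Frobenius eigenvalues of ordinary elliptic curves\<close>

definition ordinary_frob_root :: "int \<Rightarrow> nat \<Rightarrow> complex \<Rightarrow> bool" where
  "ordinary_frob_root a q \<alpha> \<longleftrightarrow>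
     \<alpha> + cnj \<alpha> = of_int a \<and> \<alpha> * cnj \<alpha> = of_nat q \<and> (\<forall>n>0. \<alpha> ^ n \<noteq> cnj \<alpha> ^ n)"

lemma ordinary_frob_root_cnj: "ordinary_frob_root a q \<alpha> \<Longrightarrow> ordinary_frob_root a q (cnj \<alpha>)"
  unfolding ordinary_frob_root_def by (metis add.commute mult.commute complex_cnj_cnj)

lemma ordinary_frob_root_nonzero:
  assumes "ordinary_frob_root a q \<alpha>"
  shows "\<alpha> \<noteq> 0"
proof
  assume "\<alpha> = 0"
  then have "\<alpha> ^ 1 = cnj \<alpha> ^ 1"
    by simp
  with assms show False
    unfolding ordinary_frob_root_def using zero_less_one by blast
qed

lemma ordinary_frob_root_norm_pos:
  assumes "ordinary_frob_root a q \<alpha>"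
  shows "q > 0"
proof -
  have "\<alpha> * cnj \<alpha> \<noteq> 0"
    using ordinary_frob_root_nonzero[OF assms] by simp
  with assms show ?thesis
    unfolding ordinary_frob_root_def by simp
qed

lemma poly_frob_poly: "poly (map_poly of_int (frob_poly a q)) x = x\<^sup>2 - of_int a * x + of_nat q"
  by (simp add: frob_poly_def map_poly_pCons power2_eq_square algebra_simps)

lemma poly_frob_poly_mult:
  "poly (map_poly of_int (frob_poly a q * frob_poly b q)) x
     = poly (map_poly of_int (frob_poly a q)) x * poly (map_poly of_int (frob_poly b q)) (x :: complex)"
  by (simp add: frob_poly_def map_poly_pCons algebra_simps)

lemma poly_frob_poly_eq_factors:
  assumes "\<alpha> + cnj \<alpha> = of_int a" and "\<alpha> * cnj \<alpha> = of_nat q"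
  shows "poly (map_poly of_int (frob_poly a q)) x = (x - \<alpha>) * (x - cnj \<alpha>)"
  unfolding poly_frob_poly assms(1,2)[symmetric] by (simp add: algebra_simps power2_eq_square)

lemma ordinary_frob_root_quadratic:
  assumes "ordinary_frob_root a q \<alpha>"
  shows "\<alpha>\<^sup>2 = of_int a * \<alpha> - of_int (int q)"
proof -
  have "\<alpha> + cnj \<alpha> = of_int a" and "\<alpha> * cnj \<alpha> = of_nat q"
    using assms unfolding ordinary_frob_root_def by simp_all
  from poly_frob_poly_eq_factors[OF this, of \<alpha>] have "\<alpha>\<^sup>2 - of_int a * \<alpha> + of_nat q = 0"
    by (simp add: poly_frob_poly)
  then show ?thesis
    by (simp add: algebra_simps)
qed

lemma quadratic_root_trace_norm:
  fixes \<alpha> :: complex and a c :: real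
  assumes root: "\<alpha>\<^sup>2 - of_real a * \<alpha> + of_real c = 0" and disc: "a\<^sup>2 < 4 * c"
  shows "\<alpha> + cnj \<alpha> = of_real a" and "\<alpha> * cnj \<alpha> = of_real c"
proof -
  have "Im \<alpha> \<noteq> 0"
  proof
    assume "Im \<alpha> = 0"
    then obtain r where r: "\<alpha> = of_real r"
      by (metis complex_is_Real_iff Reals_cases)
    have "of_real (r\<^sup>2 - a * r + c) = (0 :: complex)"
      using root by (simp add: r)
    then have "r\<^sup>2 - a * r + c = 0"
      by (simp only: of_real_eq_0_iff)
    then have "(2 * r - a)\<^sup>2 = a\<^sup>2 - 4 * c"
      by (simp add: power2_eq_square algebra_simps)
    with disc show False
      by (metis diff_less_0_iff_less not_less zero_le_power2)
  qed
  then have "\<alpha> \<noteq> cnj \<alpha>"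
    by (metis cnj.simps(2) neg_equal_zero)
  have "cnj \<alpha> ^ 2 - of_real a * cnj \<alpha> + of_real c = 0"
    using arg_cong[OF root, of cnj] by simp
  moreover have "(\<alpha> - cnj \<alpha>) * (\<alpha> + cnj \<alpha> - of_real a)
      = (\<alpha>\<^sup>2 - of_real a * \<alpha> + of_real c) - (cnj \<alpha> ^ 2 - of_real a * cnj \<alpha> + of_real c)"
    by (simp add: power2_eq_square algebra_simps)
  ultimately have "(\<alpha> - cnj \<alpha>) * (\<alpha> + cnj \<alpha> - of_real a) = 0"
    using root by simp
  with \<open>\<alpha> \<noteq> cnj \<alpha>\<close> show trace: "\<alpha> + cnj \<alpha> = of_real a"
    by simp
  show "\<alpha> * cnj \<alpha> = of_real c"
    using root unfolding trace[symmetric] by (simp add: power2_eq_square algebra_simps)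
qed

text \<open>If \<open>\<alpha> / cnj \<alpha> = \<alpha>\<^sup>2 / q\<close> were a root of unity, its trace \<open>(a\<^sup>2 - 2 q) / q\<close> would force
  \<open>q\<close> to divide a power of \<open>a\<^sup>2 - 2 q\<close>, hence \<open>p\<close> to divide \<open>a\<close>.\<close>

lemma frob_root_ratio_not_root_of_unity:
  fixes \<alpha> :: complex
  assumes trace: "\<alpha> + cnj \<alpha> = of_int a" and norm: "\<alpha> * cnj \<alpha> = of_nat q"
    and "prime p" and "p dvd q" and "q > 0" and "\<not> int p dvd a" and "n > 0"
  shows "\<alpha> ^ n \<noteq> cnj \<alpha> ^ n"
proof
  assume eq: "\<alpha> ^ n = cnj \<alpha> ^ n"
  define z where "z = \<alpha> / cnj \<alpha>"
  have "\<alpha> \<noteq> 0"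
    using norm \<open>q > 0\<close> by auto
  then have "z * cnj z = 1" and "z ^ n = 1"
    using eq by (simp_all add: z_def power_divide)
  have "(z + cnj z) * (\<alpha> * cnj \<alpha>) = \<alpha>\<^sup>2 + cnj \<alpha> ^ 2"
    using \<open>\<alpha> \<noteq> 0\<close> by (simp add: z_def field_simps power2_eq_square)
  then have "(z + cnj z) * of_int (int q) = \<alpha>\<^sup>2 + cnj \<alpha> ^ 2"
    by (simp add: norm)
  also have "\<dots> = (\<alpha> + cnj \<alpha>)\<^sup>2 - 2 * (\<alpha> * cnj \<alpha>)"
    by (simp add: power2_eq_square algebra_simps)
  also have "\<dots> = of_int (a\<^sup>2 - 2 * int q)"
    unfolding trace norm by simp
  finally have "int q dvd (a\<^sup>2 - 2 * int q) ^ n"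
    using root_of_unity_trace_dvd \<open>z * cnj z = 1\<close> \<open>z ^ n = 1\<close> \<open>n > 0\<close> by blast
  moreover have "prime (int p)"
    using \<open>prime p\<close> by simp
  ultimately have "int p dvd a\<^sup>2 - 2 * int q"
    using \<open>p dvd q\<close> by (meson dvd_trans int_dvd_int_iff prime_dvd_power)
  moreover have "int p dvd 2 * int q"
    using \<open>p dvd q\<close> by simp
  ultimately have "int p dvd a\<^sup>2"
    by (metis dvd_add diff_add_cancel)
  with \<open>prime (int p)\<close> \<open>\<not> int p dvd a\<close> show False
    using prime_dvd_power by blast
qed

lemma ordinary_frob_rootI:
  assumes "prime p" and "p dvd q" and "q > 0" and "a\<^sup>2 \<le> 4 * int q" and "\<not> int p dvd a"
    and "poly (map_poly of_int (frob_poly a q)) \<alpha> = 0"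
  shows "ordinary_frob_root a q \<alpha>"
proof -
  have "prime (int p)"
    using \<open>prime p\<close> by simp
  have "a\<^sup>2 \<noteq> 4 * int q"
  proof
    assume "a\<^sup>2 = 4 * int q"
    with \<open>p dvd q\<close> have "int p dvd a\<^sup>2"
      by simp
    with \<open>prime (int p)\<close> \<open>\<not> int p dvd a\<close> show False
      using prime_dvd_power by blast
  qed
  with \<open>a\<^sup>2 \<le> 4 * int q\<close> have "real_of_int (a\<^sup>2) < real_of_int (4 * int q)"
    by (simp only: of_int_less_iff)
  then have "(real_of_int a)\<^sup>2 < 4 * real q"
    by simp
  moreover have "\<alpha>\<^sup>2 - of_real (of_int a) * \<alpha> + of_real (real q) = 0"
    using assms(6) by (simp add: poly_frob_poly)
  ultimately have "\<alpha> + cnj \<alpha> = of_real (of_int a)" and "\<alpha> * cnj \<alpha> = of_real (real q)"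
    using quadratic_root_trace_norm by blast+
  then have "\<alpha> + cnj \<alpha> = of_int a" and "\<alpha> * cnj \<alpha> = of_nat q"
    by simp_all
  with assms(1,2,3,5) show ?thesis
    unfolding ordinary_frob_root_def using frob_root_ratio_not_root_of_unity by blast
qed

lemma ordinary_frob_root_normalized:
  assumes "ordinary_frob_root a q \<beta>"
  defines "u \<equiv> \<beta> / complex_of_real (sqrt (real q))"
  shows "cmod u = 1" and "\<forall>n>0. u ^ n \<noteq> 1"
    and "cnj \<beta> / complex_of_real (sqrt (real q)) = u powi -1"
proof -
  have "q > 0"
    using ordinary_frob_root_norm_pos[OF assms(1)] .
  have "complex_of_real ((cmod \<beta>)\<^sup>2) = \<beta> * cnj \<beta>"
    by (rule complex_norm_square)
  also have "\<dots> = of_nat q"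
    using assms(1) unfolding ordinary_frob_root_def by simp
  finally have "complex_of_real ((cmod \<beta>)\<^sup>2) = of_nat q" .
  then have "cmod \<beta> = sqrt (real q)"
    by (metis norm_ge_zero of_real_eq_iff of_real_of_nat_eq real_sqrt_unique)
  with \<open>q > 0\<close> show "cmod u = 1"
    by (simp add: u_def norm_divide)
  have "u * cnj u = complex_of_real ((cmod u)\<^sup>2)"
    by (rule complex_norm_square[symmetric])
  also have "\<dots> = 1"
    using \<open>cmod u = 1\<close> by simp
  finally have "inverse u = cnj u"
    by (rule inverse_unique)
  then show "cnj \<beta> / complex_of_real (sqrt (real q)) = u powi -1"
    by (simp add: u_def power_int_minus)
  show "\<forall>n>0. u ^ n \<noteq> 1"
  proof (intro allI impI notI)
    fix n :: nat
    assume "n > 0" and "u ^ n = 1"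
    then have "\<beta> ^ n = complex_of_real (sqrt (real q) ^ n)"
      using \<open>q > 0\<close> by (simp add: u_def power_divide)
    then have "\<beta> ^ n = cnj \<beta> ^ n"
      by (metis complex_cnj_complex_of_real complex_cnj_power)
    with assms(1) \<open>n > 0\<close> show False
      unfolding ordinary_frob_root_def by blast
  qed
qed

section \<open>Isogenies over extensions of the base field\<close>

lemma poly_frob_poly_ext: "poly (frob_poly_ext \<alpha> n) x = (x - \<alpha> ^ n) * (x - cnj \<alpha> ^ n)"
  by (simp add: frob_poly_ext_def algebra_simps)

lemma frob_poly_ext_cnj: "frob_poly_ext (cnj \<alpha>) = frob_poly_ext \<alpha>"
  by (simp add: frob_poly_ext_def fun_eq_iff mult.commute)

lemma isogenous_over_ext_iff: "isogenous_over_ext \<alpha> \<beta> n \<longleftrightarrow> \<beta> ^ n = \<alpha> ^ n \<or> \<beta> ^ n = cnj \<alpha> ^ n"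
proof
  assume "isogenous_over_ext \<alpha> \<beta> n"
  then have "poly (frob_poly_ext \<alpha> n) (\<beta> ^ n) = poly (frob_poly_ext \<beta> n) (\<beta> ^ n)"
    unfolding isogenous_over_ext_def by simp
  then show "\<beta> ^ n = \<alpha> ^ n \<or> \<beta> ^ n = cnj \<alpha> ^ n"
    by (simp add: poly_frob_poly_ext)
next
  assume "\<beta> ^ n = \<alpha> ^ n \<or> \<beta> ^ n = cnj \<alpha> ^ n"
  then have "frob_poly_ext \<beta> n = frob_poly_ext \<alpha> n \<or> frob_poly_ext \<beta> n = frob_poly_ext (cnj \<alpha>) n"
    unfolding frob_poly_ext_def by (metis complex_cnj_power)
  then show "isogenous_over_ext \<alpha> \<beta> n"
    unfolding isogenous_over_ext_def frob_poly_ext_cnj by auto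
qed

lemma roots_eq_if_linear_factors_eq:
  fixes a b c d a' b' c' d' :: "'a :: idom"
  assumes "\<And>x. (x - a) * (x - b) * (x - c) * (x - d) = (x - a') * (x - b') * (x - c') * (x - d')"
  shows "{a, b, c, d} = {a', b', c', d'}"
proof -
  have "{a, b, c, d} = {x. (x - a) * (x - b) * (x - c) * (x - d) = 0}"
    by auto
  also have "\<dots> = {x. (x - a') * (x - b') * (x - c') * (x - d') = 0}"
    using assms by simp
  also have "\<dots> = {a', b', c', d'}"
    by auto
  finally show ?thesis .
qed

lemma frob_roots_of_product:
  assumes "ordinary_frob_root a1 q \<alpha>1" and "ordinary_frob_root a2 q \<alpha>2"
    and "map_poly of_int (frob_poly a1 q * frob_poly a2 q)
           = [:- \<beta>1, 1:] * [:- \<beta>2, 1:] * [:- cnj \<beta>1, 1:] * [:- cnj \<beta>2, 1:]"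
  shows "{\<beta>1, cnj \<beta>1, \<beta>2, cnj \<beta>2} = {\<alpha>1, cnj \<alpha>1, \<alpha>2, cnj \<alpha>2}"
proof -
  have factors: "poly (map_poly of_int (frob_poly a q)) x = (x - \<alpha>) * (x - cnj \<alpha>)"
    if "ordinary_frob_root a q \<alpha>" for a \<alpha> x
    using that poly_frob_poly_eq_factors unfolding ordinary_frob_root_def by blast
  have "(x - \<alpha>1) * (x - cnj \<alpha>1) * (x - \<alpha>2) * (x - cnj \<alpha>2)
      = (x - \<beta>1) * (x - \<beta>2) * (x - cnj \<beta>1) * (x - cnj \<beta>2)" for x
  proof -
    have "(x - \<alpha>1) * (x - cnj \<alpha>1) * (x - \<alpha>2) * (x - cnj \<alpha>2)
        = poly (map_poly of_int (frob_poly a1 q * frob_poly a2 q)) x"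
      by (simp add: poly_frob_poly_mult factors[OF assms(1)] factors[OF assms(2)] mult.assoc)
    also have "\<dots> = (x - \<beta>1) * (x - \<beta>2) * (x - cnj \<beta>1) * (x - cnj \<beta>2)"
      unfolding assms(3) by (simp add: algebra_simps)
    finally show ?thesis .
  qed
  then have "{\<alpha>1, cnj \<alpha>1, \<alpha>2, cnj \<alpha>2} = {\<beta>1, \<beta>2, cnj \<beta>1, cnj \<beta>2}"
    by (rule roots_eq_if_linear_factors_eq)
  then show ?thesis
    by (simp add: insert_commute)
qed

lemma isogenous_over_ext_cong:
  assumes "{\<beta>1, cnj \<beta>1, \<beta>2, cnj \<beta>2} = {\<alpha>1, cnj \<alpha>1, \<alpha>2, cnj \<alpha>2}"
  shows "isogenous_over_ext \<beta>1 \<beta>2 n \<longleftrightarrow> isogenous_over_ext \<alpha>1 \<alpha>2 n"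
proof -
  have F: "frob_poly_ext x \<in> {frob_poly_ext y1, frob_poly_ext y2}"
    if "x \<in> {y1, cnj y1, y2, cnj y2}" for x y1 y2
    using that frob_poly_ext_cnj by auto
  have "{frob_poly_ext \<beta>1, frob_poly_ext \<beta>2} = {frob_poly_ext \<alpha>1, frob_poly_ext \<alpha>2}"
    using F[of _ \<alpha>1 \<alpha>2] F[of _ \<beta>1 \<beta>2] assms by blast
  then show ?thesis
    unfolding isogenous_over_ext_def doubleton_eq_iff by auto
qed

lemma isogenous_over_ext_minimal_twist:
  assumes "\<alpha> \<noteq> 0" and "m > 0" and "isogenous_over_ext \<alpha> \<beta> m"
    and minimal: "\<forall>n. 0 < n \<and> n < m \<longrightarrow> \<not> isogenous_over_ext \<alpha> \<beta> n"
  obtains \<gamma> where "\<gamma> = \<alpha> \<or> \<gamma> = cnj \<alpha>" and "\<beta> ^ m = \<gamma> ^ m"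
    and "primitive_root_unity m (\<beta> / \<gamma>)"
proof -
  obtain \<gamma> where \<gamma>: "\<gamma> = \<alpha> \<or> \<gamma> = cnj \<alpha>" and "\<beta> ^ m = \<gamma> ^ m"
    using assms(3) isogenous_over_ext_iff by blast
  have "\<gamma> \<noteq> 0"
    using \<gamma> \<open>\<alpha> \<noteq> 0\<close> by auto
  have "(\<beta> / \<gamma>) ^ n \<noteq> 1" if "0 < n" "n < m" for n
  proof
    assume "(\<beta> / \<gamma>) ^ n = 1"
    then have "\<beta> ^ n = \<gamma> ^ n"
      using \<open>\<gamma> \<noteq> 0\<close> by (simp add: power_divide)
    then have "isogenous_over_ext \<alpha> \<beta> n"
      using \<gamma> isogenous_over_ext_iff by auto
    with minimal that show False
      by blast
  qed
  with \<open>m > 0\<close> \<open>\<beta> ^ m = \<gamma> ^ m\<close> \<open>\<gamma> \<noteq> 0\<close> have "primitive_root_unity m (\<beta> / \<gamma>)"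
    unfolding primitive_root_unity_def by (simp add: power_divide)
  with \<gamma> \<open>\<beta> ^ m = \<gamma> ^ m\<close> show thesis
    using that by blast
qed

lemma power_reduce_quadratic:
  "\<exists>x y :: int. \<forall>g :: 'a :: comm_ring_1.
     g\<^sup>2 = of_int a * g - of_int c \<longrightarrow> g ^ n = of_int x + of_int y * g"
proof (induction n)
  case 0
  show ?case
    by (intro exI[of _ 1] exI[of _ 0]) simp
next
  case (Suc n)
  then obtain x y :: int
    where xy: "\<And>g :: 'a. g\<^sup>2 = of_int a * g - of_int c \<Longrightarrow> g ^ n = of_int x + of_int y * g"
    by blast
  have "g ^ Suc n = of_int (- y * c) + of_int (x + y * a) * g"
    if "g\<^sup>2 = of_int a * g - of_int c" for g :: 'a
  proof -
    have "g ^ Suc n = of_int x * g + of_int y * g\<^sup>2"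
      using xy[OF that] by (simp add: power2_eq_square algebra_simps)
    then show ?thesis
      using that by (simp add: algebra_simps)
  qed
  then show ?case
    by blast
qed

text \<open>\<open>y' \<noteq> 0\<close> because otherwise \<open>\<beta>\<^sup>m\<close> would be an integer, hence equal to \<open>cnj \<beta>\<^sup>m\<close>.\<close>

lemma ordinary_frob_root_power_eq_linear:
  assumes \<gamma>: "ordinary_frob_root a q \<gamma>" and \<beta>: "ordinary_frob_root b q \<beta>"
    and "\<beta> ^ m = \<gamma> ^ m" and "m > 0"
  obtains c y y' :: int where "y' \<noteq> 0"
    and "of_int y' * \<beta> = of_int c + of_int y * \<gamma>"
    and "of_int y' * cnj \<beta> = of_int c + of_int y * cnj \<gamma>"
proof -
  obtain x y :: int
    where x: "\<And>g :: complex. g\<^sup>2 = of_int a * g - of_int (int q) \<Longrightarrow> g ^ m = of_int x + of_int y * g"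
    using power_reduce_quadratic by blast
  obtain x' y' :: int
    where x': "\<And>g :: complex. g\<^sup>2 = of_int b * g - of_int (int q) \<Longrightarrow> g ^ m = of_int x' + of_int y' * g"
    using power_reduce_quadratic by blast
  have \<gamma>m: "\<gamma> ^ m = of_int x + of_int y * \<gamma>" and \<gamma>m': "cnj \<gamma> ^ m = of_int x + of_int y * cnj \<gamma>"
    using x ordinary_frob_root_quadratic \<gamma> ordinary_frob_root_cnj by blast+
  have \<beta>m: "\<beta> ^ m = of_int x' + of_int y' * \<beta>" and \<beta>m': "cnj \<beta> ^ m = of_int x' + of_int y' * cnj \<beta>"
    using x' ordinary_frob_root_quadratic \<beta> ordinary_frob_root_cnj by blast+
  have shift: "of_int y' * z = of_int (x - x') + of_int y * w"
    if "of_int x' + of_int y' * z = of_int x + of_int y * w" for z w :: complex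
    using that by (simp add: algebra_simps)
  show thesis
  proof
    show "y' \<noteq> 0"
    proof
      assume "y' = 0"
      then have "\<beta> ^ m = cnj \<beta> ^ m"
        using \<beta>m \<beta>m' by simp
      with \<beta> \<open>m > 0\<close> show False
        unfolding ordinary_frob_root_def by blast
    qed
    show "of_int y' * \<beta> = of_int (x - x') + of_int y * \<gamma>"
      using \<beta>m \<gamma>m \<open>\<beta> ^ m = \<gamma> ^ m\<close> by (intro shift) simp
    have "cnj \<beta> ^ m = cnj \<gamma> ^ m"
      using \<open>\<beta> ^ m = \<gamma> ^ m\<close> by (metis complex_cnj_power)
    then show "of_int y' * cnj \<beta> = of_int (x - x') + of_int y * cnj \<gamma>"
      using \<beta>m' \<gamma>m' by (intro shift) simp
  qed
qed

lemma ordinary_frob_root_ratio_trace_Ints: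
  assumes \<gamma>: "ordinary_frob_root a q \<gamma>" and \<beta>: "ordinary_frob_root b q \<beta>"
    and "\<beta> ^ m = \<gamma> ^ m" and "m > 0"
  shows "\<beta> / \<gamma> + cnj (\<beta> / \<gamma>) \<in> \<int>"
proof -
  define \<zeta> where "\<zeta> = \<beta> / \<gamma>"
  have "q > 0"
    using ordinary_frob_root_norm_pos[OF \<gamma>] .
  have norm: "\<gamma> * cnj \<gamma> = of_nat q" "\<beta> * cnj \<beta> = of_nat q" and trace: "\<gamma> + cnj \<gamma> = of_int a"
    using \<gamma> \<beta> unfolding ordinary_frob_root_def by blast+
  have "\<gamma> \<noteq> 0"
    using ordinary_frob_root_nonzero[OF \<gamma>] .
  have \<zeta>: "\<zeta> = \<beta> * cnj \<gamma> / of_nat q"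
    using \<open>\<gamma> \<noteq> 0\<close> unfolding \<zeta>_def norm(1)[symmetric] by (simp add: field_simps)
  have "\<zeta> * cnj \<zeta> = (\<beta> * cnj \<beta>) * (\<gamma> * cnj \<gamma>) / (of_nat q)\<^sup>2"
    unfolding \<zeta> by (simp add: field_simps power2_eq_square)
  then have unit: "\<zeta> * cnj \<zeta> = 1"
    using \<open>q > 0\<close> norm by (simp add: power2_eq_square)
  have root: "\<zeta> ^ m = 1"
    using \<open>\<beta> ^ m = \<gamma> ^ m\<close> \<open>\<gamma> \<noteq> 0\<close> by (simp add: \<zeta>_def power_divide)
  obtain c y y' :: int where "y' \<noteq> 0"
    and lin: "of_int y' * \<beta> = of_int c + of_int y * \<gamma>"
      "of_int y' * cnj \<beta> = of_int c + of_int y * cnj \<gamma>"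
    using ordinary_frob_root_power_eq_linear[OF assms] .
  have "(\<zeta> + cnj \<zeta>) * of_int (y' * int q) = (of_int y' * \<beta>) * cnj \<gamma> + (of_int y' * cnj \<beta>) * \<gamma>"
    unfolding \<zeta> using \<open>q > 0\<close> by (simp add: field_simps)
  also have "\<dots> = of_int c * (\<gamma> + cnj \<gamma>) + 2 * of_int y * (\<gamma> * cnj \<gamma>)"
    unfolding lin by (simp add: algebra_simps)
  also have "\<dots> = of_int (c * a + 2 * y * int q)"
    unfolding trace norm by simp
  finally have rational: "(\<zeta> + cnj \<zeta>) * of_int (y' * int q) = of_int (c * a + 2 * y * int q)" .
  show ?thesis
    using root_of_unity_rational_trace_Ints[OF unit rational _ root] \<open>y' \<noteq> 0\<close> \<open>q > 0\<close> \<open>m > 0\<close>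
    unfolding \<zeta>_def by simp
qed

lemma minimal_isogeny_twist:
  assumes \<beta>1: "ordinary_frob_root b1 q \<beta>1" and \<beta>2: "ordinary_frob_root b2 q \<beta>2"
    and "m > 0" and "isogenous_over_ext \<beta>1 \<beta>2 m"
    and "\<forall>n. 0 < n \<and> n < m \<longrightarrow> \<not> isogenous_over_ext \<beta>1 \<beta>2 n"
  obtains \<zeta> s where "primitive_root_unity m \<zeta>" and "\<zeta> + cnj \<zeta> \<in> \<int>"
    and "\<beta>2 / complex_of_real (sqrt (real q)) = \<zeta> * (\<beta>1 / complex_of_real (sqrt (real q))) powi s"
proof -
  obtain \<gamma> where \<gamma>: "\<gamma> = \<beta>1 \<or> \<gamma> = cnj \<beta>1" and "\<beta>2 ^ m = \<gamma> ^ m"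
    and \<zeta>: "primitive_root_unity m (\<beta>2 / \<gamma>)"
    using isogenous_over_ext_minimal_twist[OF ordinary_frob_root_nonzero[OF \<beta>1] assms(3-5)] .
  have "ordinary_frob_root b1 q \<gamma>"
    using \<gamma> \<beta>1 ordinary_frob_root_cnj by auto
  then have trace: "\<beta>2 / \<gamma> + cnj (\<beta>2 / \<gamma>) \<in> \<int>"
    using ordinary_frob_root_ratio_trace_Ints \<beta>2 \<open>\<beta>2 ^ m = \<gamma> ^ m\<close> \<open>m > 0\<close> by blast
  define sq where "sq = complex_of_real (sqrt (real q))"
  obtain s where s: "\<gamma> / sq = (\<beta>1 / sq) powi s"
  proof (cases "\<gamma> = \<beta>1")
    case True
    then show ?thesis
      using that[of 1] by simp
  next
    case False
    with \<gamma> have "\<gamma> = cnj \<beta>1"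
      by simp
    then show ?thesis
      using that[of "-1"] ordinary_frob_root_normalized(3)[OF \<beta>1] unfolding sq_def by simp
  qed
  have "\<gamma> \<noteq> 0"
    using ordinary_frob_root_nonzero \<open>ordinary_frob_root b1 q \<gamma>\<close> by blast
  then have "\<beta>2 / sq = \<beta>2 / \<gamma> * (\<beta>1 / sq) powi s"
    unfolding s[symmetric] by simp
  then show thesis
    using that[OF \<zeta> trace] unfolding sq_def by blast
qed

section \<open>Angle rank\<close>

lemma prod_powi_pair: "(\<Prod>n<length [x, y]. ([x, y] ! n) powi k n) = x powi k 0 * y powi k 1"
  by (simp add: numeral_2_eq_2)

lemma gen_mult_group_pair: "gen_mult_group [x, y] = {x powi i * y powi j | i j. True}"
  unfolding gen_mult_group_def prod_powi_pair
proof (intro equalityI subsetI)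
  fix z assume "z \<in> {x powi i * y powi j | i j. True}"
  then obtain i j where z: "z = x powi i * y powi j"
    by blast
  define k :: "nat \<Rightarrow> int" where "k n = (if n = 0 then i else j)" for n
  have "z = x powi k 0 * y powi k 1"
    by (simp add: z k_def)
  then show "z \<in> {x powi k 0 * y powi k 1 | k :: nat \<Rightarrow> int. True}"
    by blast
next
  fix z assume "z \<in> {x powi k 0 * y powi k 1 | k :: nat \<Rightarrow> int. True}"
  then obtain k :: "nat \<Rightarrow> int" where "z = x powi k 0 * y powi k 1"
    by blast
  then show "z \<in> {x powi i * y powi j | i j. True}"
    by blast
qed

lemma mult_indep_single: "mult_indep [x] \<longleftrightarrow> (\<forall>i. x powi i = 1 \<longrightarrow> i = 0)"
  unfolding mult_indep_def
proof (intro iffI allI impI)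
  fix i
  assume indep: "\<forall>k. (\<Prod>n<length [x]. ([x] ! n) powi k n) = 1 \<longrightarrow> (\<forall>n<length [x]. k n = 0)"
    and "x powi i = 1"
  from indep[rule_format, of "\<lambda>_. i"] \<open>x powi i = 1\<close> show "i = 0"
    by simp
next
  fix k :: "nat \<Rightarrow> int" and n
  assume "\<forall>i. x powi i = 1 \<longrightarrow> i = 0" and "(\<Prod>n<length [x]. ([x] ! n) powi k n) = 1"
    and "n < length [x]"
  then show "k n = 0"
    by simp
qed

lemma mult_indep_pair:
  "mult_indep [x, y] \<longleftrightarrow> (\<forall>i j. x powi i * y powi j = 1 \<longrightarrow> i = 0 \<and> j = 0)"
  unfolding mult_indep_def prod_powi_pair
proof (intro iffI allI impI)
  fix i j
  assume indep: "\<forall>k. x powi k 0 * y powi k 1 = 1 \<longrightarrow> (\<forall>n<length [x, y]. k n = 0)"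
    and "x powi i * y powi j = 1"
  define k :: "nat \<Rightarrow> int" where "k n = (if n = 0 then i else j)" for n
  have "x powi k 0 * y powi k 1 = 1"
    using \<open>x powi i * y powi j = 1\<close> by (simp add: k_def)
  then have "\<forall>n<length [x, y]. k n = 0"
    using indep by blast
  then have "k 0 = 0" and "k 1 = 0"
    by simp_all
  then show "i = 0 \<and> j = 0"
    by (simp add: k_def)
next
  fix k :: "nat \<Rightarrow> int" and n
  assume indep: "\<forall>i j. x powi i * y powi j = 1 \<longrightarrow> i = 0 \<and> j = 0"
    and "x powi k 0 * y powi k 1 = 1" and "n < length [x, y]"
  from indep[rule_format, OF \<open>x powi k 0 * y powi k 1 = 1\<close>] have "k 0 = 0 \<and> k 1 = 0" .
  with \<open>n < length [x, y]\<close> show "k n = 0"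
    by (auto simp: less_Suc_eq)
qed

lemma not_root_unity_powi_eq_1:
  fixes u :: "'a :: field"
  assumes "\<forall>n>0. u ^ n \<noteq> 1" and "u powi k = 1"
  shows "k = 0"
proof (rule ccontr)
  assume "k \<noteq> 0"
  moreover have "u ^ nat \<bar>k\<bar> = 1"
    using assms(2) by (cases "k \<ge> 0") (auto simp: power_int_def power_inverse)
  ultimately show False
    using assms(1) by simp
qed

text \<open>The relation is \<open>x\<^sup>m = 1\<close> if both powers are trivial and \<open>x\<^sup>m\<^sup>C y\<^sup>-\<^sup>m\<^sup>A = 1\<close> otherwise.\<close>

lemma not_mult_indep_if_powers_in_cyclic:
  fixes u x y :: complex
  assumes "u \<noteq> 0" and "m > 0" and x: "x ^ m = u powi A" and y: "y ^ m = u powi C"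
  shows "\<not> mult_indep [x, y]"
proof (cases "A = 0 \<and> C = 0")
  case True
  then have relation: "x powi int m * y powi 0 = 1"
    using x by simp
  show ?thesis
  proof
    assume "mult_indep [x, y]"
    then have "int m = 0"
      using relation unfolding mult_indep_pair by blast
    with \<open>m > 0\<close> show False
      by simp
  qed
next
  case False
  have "x powi (int m * C) * y powi (int m * - A) = u powi (A * C) * u powi (C * - A)"
    using x y by (simp only: power_int_mult power_int_of_nat)
  also have "\<dots> = u powi (A * C + C * - A)"
    using \<open>u \<noteq> 0\<close> by (intro power_int_add[symmetric]) simp
  also have "\<dots> = 1"
    by simp
  finally have relation: "x powi (int m * C) * y powi (int m * - A) = 1" .
  show ?thesis
  proof
    assume "mult_indep [x, y]"
    then have "int m * C = 0 \<and> int m * - A = 0"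
      using relation unfolding mult_indep_pair by blast
    with False \<open>m > 0\<close> show False
      by simp
  qed
qed

lemma gen_mult_group_twisted_pair_power:
  fixes u \<zeta> :: complex
  assumes "x \<in> gen_mult_group [u, \<zeta> * u powi s]" and "u \<noteq> 0" and "\<zeta> ^ m = 1"
  shows "\<exists>A. x ^ m = u powi A"
proof -
  obtain i j where x: "x = u powi i * (\<zeta> * u powi s) powi j"
    using assms(1) unfolding gen_mult_group_pair by blast
  have "(\<zeta> * u powi s) powi j = \<zeta> powi j * u powi (s * j)"
    by (simp add: power_int_mult_distrib power_int_mult)
  then have "x = \<zeta> powi j * u powi (i + s * j)"
    using \<open>u \<noteq> 0\<close> by (simp add: x power_int_add mult_ac)
  then have "x ^ m = (\<zeta> ^ m) powi j * u powi ((i + s * j) * int m)"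
    by (simp add: power_mult_distrib power_int_power power_int_power' mult.commute)
  then show ?thesis
    using \<open>\<zeta> ^ m = 1\<close> by auto
qed

lemma angle_rank_twisted_pair:
  fixes u \<zeta> :: complex
  assumes "u \<noteq> 0" and "\<forall>n>0. u ^ n \<noteq> 1" and "m > 0" and "\<zeta> ^ m = 1"
  shows "angle_rank_is [u, \<zeta> * u powi s] 1"
proof -
  define G where "G = gen_mult_group [u, \<zeta> * u powi s]"
  have dependent: "\<not> mult_indep [x, y]" if "x \<in> G" and "y \<in> G" for x y
  proof -
    obtain A where "x ^ m = u powi A"
      using gen_mult_group_twisted_pair_power \<open>x \<in> G\<close> \<open>u \<noteq> 0\<close> \<open>\<zeta> ^ m = 1\<close>
      unfolding G_def by blast
    moreover obtain C where "y ^ m = u powi C"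
      using gen_mult_group_twisted_pair_power \<open>y \<in> G\<close> \<open>u \<noteq> 0\<close> \<open>\<zeta> ^ m = 1\<close>
      unfolding G_def by blast
    ultimately show ?thesis
      using \<open>u \<noteq> 0\<close> \<open>m > 0\<close> not_mult_indep_if_powers_in_cyclic by blast
  qed
  have "u = u powi 1 * (\<zeta> * u powi s) powi 0"
    by simp
  then have "u \<in> G"
    unfolding G_def gen_mult_group_pair by blast
  have "mult_indep [u]"
    using not_root_unity_powi_eq_1[OF assms(2)] unfolding mult_indep_single by blast
  show ?thesis
    unfolding angle_rank_is_def has_rank_def G_def[symmetric]
  proof (intro conjI notI)
    show "\<exists>xs. length xs = 1 \<and> set xs \<subseteq> G \<and> mult_indep xs"
      using \<open>u \<in> G\<close> \<open>mult_indep [u]\<close> by (intro exI[of _ "[u]"]) simp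
    assume "\<exists>xs. length xs = Suc 1 \<and> set xs \<subseteq> G \<and> mult_indep xs"
    then obtain x y where "x \<in> G" "y \<in> G" "mult_indep [x, y]"
      by (auto simp: length_Suc_conv)
    with dependent show False
      by blast
  qed
qed

section \<open>The Serre--Frobenius group\<close>

lemma cis_2pi_frac: "cis (2 * pi * frac x) = cis (2 * pi * x)"
proof -
  have "cis (2 * pi * x) = cis (2 * pi * frac x) * cis (2 * pi * of_int \<lfloor>x\<rfloor>)"
    by (simp add: cis_mult frac_def algebra_simps)
  then show ?thesis
    by simp
qed

lemma unit_circle_eq_cis_2pi:
  assumes "cmod z = 1"
  shows "z = cis (2 * pi * (Arg z / (2 * pi)))"
proof -
  have "z \<noteq> 0"
    using assms by auto
  then show ?thesis
    using assms by (simp add: cis_Arg sgn_eq)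
qed

lemma sphere_subset_closure_range_power:
  fixes v :: complex
  assumes "cmod v = 1" and not_root: "\<forall>n>0. v ^ n \<noteq> 1"
  shows "sphere 0 1 \<subseteq> closure (range (\<lambda>n :: nat. v ^ n))"
proof -
  define e where "e x = cis (2 * pi * x)" for x
  define \<theta> where "\<theta> = Arg v / (2 * pi)"
  have power_v: "v ^ n = e (frac (real n * \<theta>))" for n
    unfolding e_def cis_2pi_frac
    by (subst unit_circle_eq_cis_2pi[OF \<open>cmod v = 1\<close>]) (simp add: Complex.DeMoivre \<theta>_def algebra_simps)
  have "\<theta> \<notin> \<rat>"
  proof
    assume "\<theta> \<in> \<rat>"
    then obtain a b :: int where "b > 0" and "\<theta> = of_int a / of_int b"
      by (metis Rats_cases')
    then have "frac (real (nat b) * \<theta>) = 0"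
      by simp
    then have "v ^ nat b = 1"
      unfolding power_v by (simp add: e_def)
    with not_root \<open>b > 0\<close> show False
      by simp
  qed
  have "sphere 0 1 \<subseteq> e ` {0..1}"
  proof
    fix z :: complex
    assume "z \<in> sphere 0 1"
    then have "z = e (frac (Arg z / (2 * pi)))"
      unfolding e_def cis_2pi_frac by (intro unit_circle_eq_cis_2pi) simp
    moreover have "frac (Arg z / (2 * pi)) \<in> {0..1}"
      by (simp add: frac_lt_1 less_imp_le)
    ultimately show "z \<in> e ` {0..1}"
      by blast
  qed
  also have "e ` {0..1} = e ` closure (range (\<lambda>n. frac (real n * \<theta>)))"
    using Kronecker_approx_1[OF \<open>\<theta> \<notin> \<rat>\<close>] by simp
  also have "\<dots> \<subseteq> closure (e ` range (\<lambda>n. frac (real n * \<theta>)))"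
    unfolding e_def by (intro image_closure_subset continuous_intros closure_subset) simp
  also have "e ` range (\<lambda>n. frac (real n * \<theta>)) = range (\<lambda>n. v ^ n)"
    by (simp add: power_v image_image)
  finally show ?thesis .
qed

lemma SF2_eq_closure_range: "SF2 u v = closure (range (\<lambda>k. (u powi k, v powi k)))"
  unfolding SF2_def by (rule arg_cong[where f = closure]) blast

lemma U1_times_C_eq: "U1_times_C m = sphere 0 1 \<times> {w. w ^ m = 1}"
  by (auto simp: U1_times_C_def)

lemma circle_times_power_in_SF2:
  assumes u: "cmod u = 1" "\<forall>n>0. u ^ n \<noteq> 1" and "\<zeta> ^ m = 1" and "m > 0" and "cmod z = 1"
  shows "(z, \<zeta> ^ j) \<in> SF2 u \<zeta>"
proof -
  define v where "v = u ^ m"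
  define \<phi> where "\<phi> y = (u ^ j * y, \<zeta> ^ j)" for y
  have "cmod v = 1"
    unfolding v_def using u(1) by (simp add: norm_power)
  moreover have "\<forall>n>0. v ^ n \<noteq> 1"
    unfolding v_def using u(2) \<open>m > 0\<close> by (simp flip: power_mult)
  moreover have "z / u ^ j \<in> sphere 0 1"
    using u(1) \<open>cmod z = 1\<close> by (simp add: norm_divide norm_power)
  ultimately have "z / u ^ j \<in> closure (range (\<lambda>l :: nat. v ^ l))"
    using sphere_subset_closure_range_power by blast
  moreover have "\<phi> ` range (\<lambda>l :: nat. v ^ l) \<subseteq> SF2 u \<zeta>"
    unfolding SF2_eq_closure_range
  proof (rule subsetI, rule closure_subset[THEN subsetD])
    fix x assume "x \<in> \<phi> ` range (\<lambda>l :: nat. v ^ l)"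
    then obtain l where "x = \<phi> (v ^ l)"
      by blast
    also have "\<dots> = (u ^ (j + m * l), \<zeta> ^ (j + m * l))"
      using \<open>\<zeta> ^ m = 1\<close> by (simp add: \<phi>_def v_def power_add power_mult)
    also have "\<dots> = (u powi int (j + m * l), \<zeta> powi int (j + m * l))"
      by (simp only: power_int_of_nat)
    finally show "x \<in> range (\<lambda>k. (u powi k, \<zeta> powi k))"
      by blast
  qed
  then have "\<phi> ` closure (range (\<lambda>l :: nat. v ^ l)) \<subseteq> SF2 u \<zeta>"
    unfolding \<phi>_def SF2_def by (intro image_closure_subset continuous_intros closed_closure)
  moreover have "(z, \<zeta> ^ j) = \<phi> (z / u ^ j)"
    using u(1) by (auto simp: \<phi>_def)
  ultimately show ?thesis
    by blast
qed

lemma SF2_primitive_root_unity: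
  assumes u: "cmod u = 1" "\<forall>n>0. u ^ n \<noteq> 1" and \<zeta>: "primitive_root_unity m \<zeta>"
  shows "SF2 u \<zeta> = U1_times_C m"
proof
  have "m > 0" and "\<zeta> ^ m = 1"
    using \<zeta> unfolding primitive_root_unity_def by auto
  have "(u powi k, \<zeta> powi k) \<in> U1_times_C m" for k
  proof -
    have "(\<zeta> powi k) ^ m = (\<zeta> ^ m) powi k"
      by (simp add: power_int_power power_int_power' mult.commute)
    then show ?thesis
      unfolding U1_times_C_def using u(1) \<open>\<zeta> ^ m = 1\<close> by (simp add: norm_power_int)
  qed
  then have "range (\<lambda>k. (u powi k, \<zeta> powi k)) \<subseteq> U1_times_C m"
    by blast
  moreover have "closed (U1_times_C m)"
    unfolding U1_times_C_eq using \<open>m > 0\<close>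
    by (intro closed_Times closed_sphere finite_imp_closed finite_roots_unity) simp
  ultimately show "SF2 u \<zeta> \<subseteq> U1_times_C m"
    unfolding SF2_eq_closure_range by (rule closure_minimal)
  show "U1_times_C m \<subseteq> SF2 u \<zeta>"
  proof
    fix p assume "p \<in> U1_times_C m"
    then obtain z w where "p = (z, w)" and "cmod z = 1" and "w ^ m = 1"
      unfolding U1_times_C_def by blast
    moreover obtain j where "w = \<zeta> ^ j"
      using primitive_root_unity_roots_eq[OF \<zeta>] \<open>w ^ m = 1\<close> by blast
    ultimately show "p \<in> SF2 u \<zeta>"
      using circle_times_power_in_SF2[OF u \<open>\<zeta> ^ m = 1\<close> \<open>m > 0\<close>] by blast
  qed
qed

definition shear :: "int \<Rightarrow> complex \<times> complex \<Rightarrow> complex \<times> complex" where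
  "shear s p = (fst p, snd p * fst p powi s)"

lemma shear_pmul: "shear s (pmul x y) = pmul (shear s x) (shear s y)"
  by (simp add: shear_def pmul_def power_int_mult_distrib ac_simps)

lemma shear_inverse: "fst p \<noteq> 0 \<Longrightarrow> shear (- s) (shear s p) = p"
  by (simp add: shear_def power_int_minus field_simps)

lemma continuous_on_shear: "(\<forall>p\<in>S. fst p \<noteq> 0) \<Longrightarrow> continuous_on S (shear s)"
  unfolding shear_def by (intro continuous_intros) auto

lemma top_group_iso_shear_image:
  assumes "\<forall>p\<in>B. fst p \<noteq> 0"
  shows "top_group_iso (shear s ` B) B"
  unfolding top_group_iso_def
proof (intro exI conjI ballI)
  have "\<forall>p\<in>shear s ` B. fst p \<noteq> 0"
    using assms by (auto simp: shear_def)
  with assms show "homeomorphism (shear s ` B) B (shear (- s)) (shear s)"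
    by (intro homeomorphismI continuous_on_shear) (auto simp: shear_inverse)
  show "shear (- s) (pmul x y) = pmul (shear (- s) x) (shear (- s) y)" for x y
    by (rule shear_pmul)
qed

lemma SF2_shear:
  assumes "cmod u = 1" and "cmod \<zeta> = 1"
  shows "SF2 u (\<zeta> * u powi s) = shear s ` SF2 u \<zeta>"
proof -
  define D where "D = range (\<lambda>k. (u powi k, \<zeta> powi k))"
  have "(u powi k, (\<zeta> * u powi s) powi k) = shear s (u powi k, \<zeta> powi k)" for k
    by (simp add: shear_def power_int_mult_distrib mult.commute flip: power_int_mult)
  then have SF2_eq: "SF2 u (\<zeta> * u powi s) = closure (shear s ` D)"
    unfolding SF2_eq_closure_range D_def image_image by (simp only:)
  have "D \<subseteq> sphere 0 1 \<times> sphere 0 1"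
    using assms by (auto simp: D_def norm_power_int)
  then have closure_D: "closure D \<subseteq> sphere 0 1 \<times> sphere 0 1"
    by (intro closure_minimal closed_Times) auto
  moreover have "bounded (sphere (0 :: complex) 1 \<times> sphere (0 :: complex) 1)"
    by (intro compact_imp_bounded compact_Times compact_sphere)
  ultimately have "compact (closure D)"
    by (meson bounded_subset closure_subset compact_closure)
  moreover have cont: "continuous_on (closure D) (shear s)"
    using closure_D by (intro continuous_on_shear) auto
  ultimately have "closed (shear s ` closure D)"
    by (intro compact_imp_closed compact_continuous_image)
  have "SF2 u \<zeta> = closure D"
    unfolding SF2_eq_closure_range D_def ..
  show ?thesis
    unfolding SF2_eq \<open>SF2 u \<zeta> = closure D\<close>
  proof (intro subset_antisym)
    show "closure (shear s ` D) \<subseteq> shear s ` closure D"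
      using \<open>closed (shear s ` closure D)\<close> by (intro closure_minimal image_mono closure_subset)
    show "shear s ` closure D \<subseteq> closure (shear s ` D)"
      using cont closed_closure closure_subset by (rule image_closure_subset)
  qed
qed

lemma top_group_iso_SF2_twisted_pair:
  assumes "cmod u = 1" and "\<forall>n>0. u ^ n \<noteq> 1" and "primitive_root_unity m \<zeta>"
  shows "top_group_iso (SF2 u (\<zeta> * u powi s)) (U1_times_C m)"
proof -
  have "SF2 u (\<zeta> * u powi s) = shear s ` SF2 u \<zeta>"
    using assms(1) primitive_root_unity_norm[OF assms(3)] by (rule SF2_shear)
  also have "SF2 u \<zeta> = U1_times_C m"
    using assms by (rule SF2_primitive_root_unity)
  finally have "SF2 u (\<zeta> * u powi s) = shear s ` U1_times_C m" .
  moreover have "top_group_iso (shear s ` U1_times_C m) (U1_times_C m)"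
    by (rule top_group_iso_shear_image) (auto simp: U1_times_C_def)
  ultimately show ?thesis
    by simp
qed

theorem lemma4p4:
  fixes p d q :: nat and a1 a2 :: int and \<alpha>1 \<alpha>2 \<beta>1 \<beta>2 :: complex
    and PS :: "int poly" and m :: nat
  assumes "prime p" and "d \<ge> 1" and "q = p ^ d"
    \<comment> \<open>E1, E2: elliptic curves over F_q with traces a1, a2 (Weil bound), ordinary\<close>
    and "a1\<^sup>2 \<le> 4 * int q" and "a2\<^sup>2 \<le> 4 * int q"
    and "\<not> int p dvd a1" and "\<not> int p dvd a2"
    and "poly (map_poly of_int (frob_poly a1 q)) \<alpha>1 = 0"
    and "poly (map_poly of_int (frob_poly a2 q)) \<alpha>2 = 0"
    \<comment> \<open>E1, E2 isogenous over the algebraic closure\<close>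
    and "\<exists>n>0. isogenous_over_ext \<alpha>1 \<alpha>2 n"
    \<comment> \<open>m minimal with E1, E2 isogenous over F_(q^m)\<close>
    and "m > 0" and "isogenous_over_ext \<alpha>1 \<alpha>2 m"
    and "\<forall>n. 0 < n \<and> n < m \<longrightarrow> \<not> isogenous_over_ext \<alpha>1 \<alpha>2 n"
    \<comment> \<open>S isogenous to E1 x E2: P_S = P_E1 P_E2; its Frobenius roots are b1, b2 and conjugates\<close>
    and "PS = frob_poly a1 q * frob_poly a2 q"
    and "map_poly of_int PS =
           [:- \<beta>1, 1:] * [:- \<beta>2, 1:] * [:- cnj \<beta>1, 1:] * [:- cnj \<beta>2, 1:]"
  shows "m \<in> {1, 2, 3, 4, 6}
       \<and> angle_rank_is [\<beta>1 / complex_of_real (sqrt (real q)), \<beta>2 / complex_of_real (sqrt (real q))] 1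
       \<and> top_group_iso (SF2 (\<beta>1 / complex_of_real (sqrt (real q))) (\<beta>2 / complex_of_real (sqrt (real q))))
                       (U1_times_C m)"
proof -
  have "p dvd q" and "q > 0"
    using assms(1-3) by (simp_all add: dvd_power prime_gt_0_nat)
  then have \<alpha>: "ordinary_frob_root a1 q \<alpha>1" "ordinary_frob_root a2 q \<alpha>2"
    using ordinary_frob_rootI[OF assms(1)] assms(4-9) by blast+
  have roots: "{\<beta>1, cnj \<beta>1, \<beta>2, cnj \<beta>2} = {\<alpha>1, cnj \<alpha>1, \<alpha>2, cnj \<alpha>2}"
    using frob_roots_of_product[OF \<alpha>] assms(14,15) by simp
  have "\<exists>b. ordinary_frob_root b q x" if "x \<in> {\<beta>1, cnj \<beta>1, \<beta>2, cnj \<beta>2}" for x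
    using that \<alpha> ordinary_frob_root_cnj unfolding roots by auto
  then obtain b1 b2 where \<beta>: "ordinary_frob_root b1 q \<beta>1" "ordinary_frob_root b2 q \<beta>2"
    by blast
  have "isogenous_over_ext \<beta>1 \<beta>2 m" and "\<forall>n. 0 < n \<and> n < m \<longrightarrow> \<not> isogenous_over_ext \<beta>1 \<beta>2 n"
    using assms(12,13) isogenous_over_ext_cong[OF roots] by simp_all
  then obtain \<zeta> s where \<zeta>: "primitive_root_unity m \<zeta>" and "\<zeta> + cnj \<zeta> \<in> \<int>"
    and \<beta>2: "\<beta>2 / complex_of_real (sqrt (real q)) = \<zeta> * (\<beta>1 / complex_of_real (sqrt (real q))) powi s"
    by (rule minimal_isogeny_twist[OF \<beta> assms(11)])
  note u = ordinary_frob_root_normalized(1,2)[OF \<beta>(1)]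
  have "\<zeta> ^ m = 1"
    using \<zeta> unfolding primitive_root_unity_def by simp
  have "m \<in> {1, 2, 3, 4, 6}"
    using primitive_root_unity_integral_trace[OF \<zeta> \<open>\<zeta> + cnj \<zeta> \<in> \<int>\<close>] .
  moreover have "angle_rank_is [\<beta>1 / complex_of_real (sqrt (real q)), \<beta>2 / complex_of_real (sqrt (real q))] 1"
    unfolding \<beta>2 using u(2) assms(11) \<open>\<zeta> ^ m = 1\<close> \<open>q > 0\<close> ordinary_frob_root_nonzero[OF \<beta>(1)]
    by (intro angle_rank_twisted_pair) auto
  moreover have "top_group_iso (SF2 (\<beta>1 / complex_of_real (sqrt (real q))) (\<beta>2 / complex_of_real (sqrt (real q))))
      (U1_times_C m)"
    unfolding \<beta>2 using u \<zeta> by (rule top_group_iso_SF2_twisted_pair)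
  ultimately show ?thesis
    by blast
qed

end
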